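(* Let $a>0$, $\alpha\in[0,1)$ and $f\in\mathcal C_a$, and let $g=\mathrm{Sh}_\alpha(f)$. Then $\|g-g^{\pm\eta}\|_{\infty,\mathbb R}\to0$ as $\eta\to0$ (for both signs).
   Context: $\mathcal C_a$ is the set of $C^1$ functions $f:\mathbb R\to\mathbb R$ that are even, satisfy $f(s)=|s|$ for $|s|\ge a$ and are strictly convex on $[-a,a]$. For any function $g$ and $\eta\in(0,1)$, $g^{\pm\eta}(s)=(1\pm\frac\eta2)g\big(s/(1\pm\frac\eta2)\big)$. For $f\in\mathcal C_a$: $F_\alpha(s)=f(s)-\alpha s$, $x_\alpha^+=(f')^{-1}(\alpha)\in[0,a)$ (inverse of $f':[-a,a]\to[-1,1]$); let $F_\alpha^{-1}$ be the inverse of $F_\alpha|_{[x_\alpha^+,\infty)}$, $\phi=F_\alpha^{-1}\circ F_\alpha$, $\delta_x=(1-\alpha)^{-1}F_\alpha(x)-\phi(x)$, $s_\alpha=x_\alpha^++\delta_{x_\alpha^+}$; $x\mapsto x+\delta_x$ is an increasing bijection $(-\infty,x_\alpha^+]\to(-\infty,s_\alpha]$ with inverse $\tau$. Define $\mathrm{Sh}_\alpha(f)(x)=\alpha x+F_\alpha(\tau(x))$ for $x\le s_\alpha$ and $=x$ for $x>s_\alpha$. *)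

theory Defs
  imports "HOL-Analysis.Analysis"
begin

definition strictly_convex_on :: "real set \<Rightarrow> (real \<Rightarrow> real) \<Rightarrow> bool" where
  "strictly_convex_on S f \<longleftrightarrow>
     (\<forall>x\<in>S. \<forall>y\<in>S. x \<noteq> y \<longrightarrow> (\<forall>t::real. 0 < t \<and> t < 1 \<longrightarrow>
        f ((1 - t) * x + t * y) < (1 - t) * f x + t * f y))"

definition class_C :: "real \<Rightarrow> (real \<Rightarrow> real) set" where
  "class_C a = {f. f C1_differentiable_on UNIV \<and> (\<forall>s. f (-s) = f s)
      \<and> (\<forall>s. a \<le> \<bar>s\<bar> \<longrightarrow> f s = \<bar>s\<bar>) \<and> strictly_convex_on {-a..a} f}"

text \<open>g^{\<pm>\<eta>}: rescaling with factor c = 1 \<pm> \<eta>/2.\<close>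
definition rescale :: "real \<Rightarrow> (real \<Rightarrow> real) \<Rightarrow> real \<Rightarrow> real" where
  "rescale c g s = c * g (s / c)"

definition Falpha :: "(real \<Rightarrow> real) \<Rightarrow> real \<Rightarrow> real \<Rightarrow> real" where
  "Falpha f \<alpha> s = f s - \<alpha> * s"

definition xplus :: "real \<Rightarrow> (real \<Rightarrow> real) \<Rightarrow> real \<Rightarrow> real" where
  "xplus a f \<alpha> = (THE x. x \<in> {-a..a} \<and> deriv f x = \<alpha>)"

definition Finv :: "real \<Rightarrow> (real \<Rightarrow> real) \<Rightarrow> real \<Rightarrow> real \<Rightarrow> real" where
  "Finv a f \<alpha> y = (THE z. xplus a f \<alpha> \<le> z \<and> Falpha f \<alpha> z = y)"

definition phi :: "real \<Rightarrow> (real \<Rightarrow> real) \<Rightarrow> real \<Rightarrow> real \<Rightarrow> real" where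
  "phi a f \<alpha> x = Finv a f \<alpha> (Falpha f \<alpha> x)"

definition delta :: "real \<Rightarrow> (real \<Rightarrow> real) \<Rightarrow> real \<Rightarrow> real \<Rightarrow> real" where
  "delta a f \<alpha> x = Falpha f \<alpha> x / (1 - \<alpha>) - phi a f \<alpha> x"

definition salpha :: "real \<Rightarrow> (real \<Rightarrow> real) \<Rightarrow> real \<Rightarrow> real" where
  "salpha a f \<alpha> = xplus a f \<alpha> + delta a f \<alpha> (xplus a f \<alpha>)"

definition tau :: "real \<Rightarrow> (real \<Rightarrow> real) \<Rightarrow> real \<Rightarrow> real \<Rightarrow> real" where
  "tau a f \<alpha> y = (THE x. x \<le> xplus a f \<alpha> \<and> x + delta a f \<alpha> x = y)"

definition Sh :: "real \<Rightarrow> real \<Rightarrow> (real \<Rightarrow> real) \<Rightarrow> real \<Rightarrow> real" where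
  "Sh a \<alpha> f x = (if x \<le> salpha a f \<alpha> then \<alpha> * x + Falpha f \<alpha> (tau a f \<alpha> x) else x)"

text \<open>Sup norm over R (extended real valued, so it is meaningful even if unbounded).\<close>
definition supnorm :: "(real \<Rightarrow> real) \<Rightarrow> ereal" where
  "supnorm h = (SUP x. ereal \<bar>h x\<bar>)"

end

theory Submission
  imports Defs
begin

(* The function g = Sh_alpha(f) is continuous and coincides with |x| outside a compact interval,
   and every such g satisfies ||g - g^c|| -> 0 as c -> 1: where |x| and |x/c| are large,
   g^c(x) = c |x/c| = |x| exactly, and on the remaining compact set the map
   (c, x) |-> g x - c g (x/c) is uniformly continuous and vanishes at c = 1.
   Continuity of Sh_alpha(f) rests on tau being 1-Lipschitz: |f'| <= 1 and phi is decreasing,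
   so x |-> x + delta_x expands distances on (-infinity, x_alpha^+]; at s_alpha both branches
   of Sh_alpha(f) equal s_alpha. Strict convexity makes f' strictly increasing on [-a, a],
   which gives x_alpha^+ and the monotonicity of F_alpha on both sides of it. *)

lemma strictly_convex_onD:
  "strictly_convex_on S f \<Longrightarrow> x \<in> S \<Longrightarrow> y \<in> S \<Longrightarrow> x \<noteq> y \<Longrightarrow> 0 < t \<Longrightarrow> t < 1 \<Longrightarrow>
    f ((1 - t) * x + t * y) < (1 - t) * f x + t * f y"
  unfolding strictly_convex_on_def by blast

lemma strictly_convex_on_deriv_less:
  fixes f :: "real \<Rightarrow> real"
  assumes convex: "strictly_convex_on {l..u} f"
    and deriv: "\<And>x. x \<in> {l<..<u} \<Longrightarrow> (f has_real_derivative f' x) (at x)"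
    and x: "x \<in> {l<..<u}" and y: "y \<in> {l<..<u}" and "x < y"
  shows "f' x < f' y"
proof (rule ccontr)
  assume "\<not> f' x < f' y"
  have "convex_on {l..u} f"
  proof (rule convex_on_linorderI)
    fix t x y :: real assume "0 < t" "t < 1" "x \<in> {l..u}" "y \<in> {l..u}" "x < y"
    then have "f ((1 - t) * x + t * y) < (1 - t) * f x + t * f y"
      by (intro strictly_convex_onD[OF convex]) auto
    then show "f ((1 - t) *\<^sub>R x + t *\<^sub>R y) \<le> (1 - t) * f x + t * f y" by simp
  qed simp
  then have tangent: "f z - f c \<ge> f' c * (z - c)" if "c \<in> {l<..<u}" "z \<in> {l..u}" for c z
    using that by (intro convex_on_imp_above_tangent has_field_derivative_at_within[OF deriv]) auto
  have lower: "f' x * (y - x) \<le> f y - f x" and upper: "f y - f x \<le> f' y * (y - x)"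
    using tangent[OF x, of y] tangent[OF y, of x] x y by (auto simp: algebra_simps)
  then have "f' x * (y - x) \<le> f' y * (y - x)" by linarith
  then have "f' x \<le> f' y"
    by (rule mult_right_le_imp_le) (use \<open>x < y\<close> in simp)
  then have chord: "f y - f x = f' x * (y - x)"
    using \<open>\<not> f' x < f' y\<close> lower upper by simp
  define z where "z = (1 - 1/2) * x + 1/2 * y"
  have "f z < (1 - 1/2) * f x + 1/2 * f y"
    using x y \<open>x < y\<close> unfolding z_def by (intro strictly_convex_onD[OF convex]) auto
  moreover have "f' x * (z - x) \<le> f z - f x"
    using tangent[OF x, of z] x y by (simp add: z_def)
  moreover have "f' x * (z - x) = (f y - f x) / 2"
    using chord by (simp add: z_def algebra_simps)
  ultimately show False by simp
qed

lemma strict_mono_on_Icc_if_Ioo: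
  fixes g :: "real \<Rightarrow> real"
  assumes cont: "continuous_on {l..u} g" and mono: "strict_mono_on {l<..<u} g"
  shows "strict_mono_on {l..u} g"
proof (rule strict_mono_onI)
  have upper: "g x \<le> g u" if x: "x \<in> {l<..<u}" for x
  proof (rule tendsto_lowerbound)
    have "(g \<longlongrightarrow> g u) (at u within {l..u})"
      using cont x by (simp add: continuous_on_def)
    then show "(g \<longlongrightarrow> g u) (at_left u)"
      using x by (simp add: at_within_Icc_at_left)
    show "\<forall>\<^sub>F y in at_left u. g x \<le> g y"
    proof (rule eventually_mono[OF eventually_at_left_real])
      show "x < u" using x by simp
      fix y assume "y \<in> {x<..<u}"
      then show "g x \<le> g y" using strict_mono_onD[OF mono, of x y] x by simp
    qed
  qed simp
  have lower: "g l \<le> g x" if x: "x \<in> {l<..<u}" for x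
  proof (rule tendsto_upperbound)
    have "(g \<longlongrightarrow> g l) (at l within {l..u})"
      using cont x by (simp add: continuous_on_def)
    then show "(g \<longlongrightarrow> g l) (at_right l)"
      using x by (simp add: at_within_Icc_at_right)
    show "\<forall>\<^sub>F y in at_right l. g y \<le> g x"
    proof (rule eventually_mono[OF eventually_at_right_real])
      show "l < x" using x by simp
      fix y assume "y \<in> {l<..<x}"
      then show "g y \<le> g x" using strict_mono_onD[OF mono, of y x] x by simp
    qed
  qed simp
  fix x y assume x: "x \<in> {l..u}" and y: "y \<in> {l..u}" and "x < y"
  define p q where "p = (2 * x + y) / 3" and "q = (x + 2 * y) / 3"
  have pq: "x < p" "p < q" "q < y" "p \<in> {l<..<u}" "q \<in> {l<..<u}"
    using x y \<open>x < y\<close> by (auto simp: p_def q_def)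
  have "g x \<le> g p"
    using lower[of p] strict_mono_onD[OF mono, of x p] x pq by (cases "x = l") auto
  also have "g p < g q" using strict_mono_onD[OF mono] pq by auto
  also have "g q \<le> g y"
    using upper[of q] strict_mono_onD[OF mono, of q y] y pq by (cases "y = u") auto
  finally show "g x < g y" .
qed

lemma supnorm_nonneg: "0 \<le> supnorm h"
proof -
  have "ereal 0 \<le> ereal \<bar>h 0\<bar>" by simp
  also have "\<dots> \<le> supnorm h" unfolding supnorm_def by (rule SUP_upper) simp
  finally show ?thesis by (simp add: zero_ereal_def)
qed

lemma supnorm_le: "(\<And>x. \<bar>h x\<bar> \<le> B) \<Longrightarrow> supnorm h \<le> ereal B"
  unfolding supnorm_def by (rule SUP_least) simp

lemma supnorm_tendsto_0I:
  assumes "\<And>\<epsilon>. \<epsilon> > 0 \<Longrightarrow> \<forall>\<^sub>F \<eta> in F. \<forall>x. \<bar>h \<eta> x\<bar> \<le> \<epsilon>"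
  shows "((\<lambda>\<eta>. supnorm (h \<eta>)) \<longlongrightarrow> 0) F"
proof (rule order_tendstoI)
  fix y :: ereal assume "y < 0"
  then show "\<forall>\<^sub>F \<eta> in F. y < supnorm (h \<eta>)"
    using supnorm_nonneg less_le_trans by (blast intro: always_eventually)
next
  fix y :: ereal assume "0 < y"
  then obtain \<epsilon> where "0 < ereal \<epsilon>" "ereal \<epsilon> < y" using ereal_dense2 by blast
  then have "\<forall>\<^sub>F \<eta> in F. \<forall>x. \<bar>h \<eta> x\<bar> \<le> \<epsilon>" using assms by simp
  then show "\<forall>\<^sub>F \<eta> in F. supnorm (h \<eta>) < y"
    by eventually_elim (use supnorm_le \<open>ereal \<epsilon> < y\<close> in \<open>blast intro: le_less_trans\<close>)
qed

lemma eventually_rescale_close: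
  fixes g :: "real \<Rightarrow> real"
  assumes cont: "continuous_on UNIV g" and abs_outside: "\<And>x. M \<le> \<bar>x\<bar> \<Longrightarrow> g x = \<bar>x\<bar>"
    and "\<epsilon> > 0"
  shows "\<forall>\<^sub>F c in nhds 1. \<forall>x. \<bar>g x - rescale c g x\<bar> \<le> \<epsilon>"
proof -
  define K where "K = 2 * max M 1"
  define G where "G = (\<lambda>p. g (snd p) - fst p * g (snd p / fst p))"
  define S :: "(real \<times> real) set" where "S = {1/2..2} \<times> {-K..K}"
  have "continuous_on S (\<lambda>p. g (snd p))" "continuous_on S (\<lambda>p. g (snd p / fst p))"
    by (intro continuous_on_compose2[OF cont] continuous_intros; force simp: S_def)+
  then have "continuous_on S G"
    unfolding G_def by (intro continuous_intros)
  then have "uniformly_continuous_on S G"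
    unfolding S_def by (intro compact_uniformly_continuous compact_Times) auto
  then obtain d where "d > 0"
    and d: "\<And>p q. p \<in> S \<Longrightarrow> q \<in> S \<Longrightarrow> dist q p < d \<Longrightarrow> dist (G q) (G p) < \<epsilon>"
    unfolding uniformly_continuous_on_def using \<open>\<epsilon> > 0\<close> by metis
  have "\<forall>\<^sub>F c in nhds (1::real). c \<in> {1/2<..<2} \<and> dist c 1 < d"
    using \<open>d > 0\<close>
    by (intro eventually_conj eventually_nhds_in_open eventually_nhds_metric[THEN iffD2]) auto
  then show ?thesis
  proof eventually_elim
    case (elim c)
    show "\<forall>x. \<bar>g x - rescale c g x\<bar> \<le> \<epsilon>"
    proof
      fix x
      show "\<bar>g x - rescale c g x\<bar> \<le> \<epsilon>"
      proof (cases "\<bar>x\<bar> \<le> K")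
        case True
        then have "(1, x) \<in> S" "(c, x) \<in> S" using elim by (auto simp: S_def)
        moreover have "dist (c, x) (1, x) < d" using elim by (simp add: dist_Pair_Pair)
        ultimately have "dist (G (c, x)) (G (1, x)) < \<epsilon>" by (rule d)
        then show ?thesis by (simp add: G_def rescale_def dist_real_def)
      next
        case False
        have "M * c \<le> max M 1 * 2" using elim by (intro mult_mono) auto
        then have "M \<le> \<bar>x / c\<bar>" "M \<le> \<bar>x\<bar>"
          using False elim by (auto simp: K_def pos_le_divide_eq)
        then show ?thesis using elim \<open>\<epsilon> > 0\<close> by (simp add: rescale_def abs_outside)
      qed
    qed
  qed
qed

lemma supnorm_rescale_tendsto_0:
  fixes g :: "real \<Rightarrow> real"
  assumes "continuous_on UNIV g" and "\<And>x. M \<le> \<bar>x\<bar> \<Longrightarrow> g x = \<bar>x\<bar>" and "(c \<longlongrightarrow> 1) F"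
  shows "((\<lambda>\<eta>. supnorm (\<lambda>x. g x - rescale (c \<eta>) g x)) \<longlongrightarrow> 0) F"
proof (rule supnorm_tendsto_0I)
  fix \<epsilon> :: real assume "\<epsilon> > 0"
  with assms(1,2) have "\<forall>\<^sub>F c' in nhds 1. \<forall>x. \<bar>g x - rescale c' g x\<bar> \<le> \<epsilon>"
    by (rule eventually_rescale_close)
  then show "\<forall>\<^sub>F \<eta> in F. \<forall>x. \<bar>g x - rescale (c \<eta>) g x\<bar> \<le> \<epsilon>"
    using assms(3) by (rule eventually_compose_filterlim)
qed

locale class_C_function =
  fixes a :: real and f :: "real \<Rightarrow> real"
  assumes a_pos: "0 < a" and in_class_C: "f \<in> class_C a"
begin

abbreviation f' :: "real \<Rightarrow> real" where "f' \<equiv> deriv f"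

lemma f_even: "f (- s) = f s"
  and f_eq_abs: "a \<le> \<bar>s\<bar> \<Longrightarrow> f s = \<bar>s\<bar>"
  and f_strictly_convex: "strictly_convex_on {-a..a} f"
  using in_class_C by (auto simp: class_C_def)

lemma has_deriv: "(f has_real_derivative f' x) (at x)"
  and deriv_continuous: "continuous_on UNIV f'"
proof -
  obtain D where D: "\<And>x. (f has_vector_derivative D x) (at x)" "continuous_on UNIV D"
    using in_class_C unfolding class_C_def C1_differentiable_on_def by blast
  then have "(f has_real_derivative D x) (at x)" for x
    by (simp add: has_real_derivative_iff_has_vector_derivative)
  moreover from this have "f' = D" by (auto intro: DERIV_imp_deriv)
  ultimately show "(f has_real_derivative f' x) (at x)" "continuous_on UNIV f'"
    using D(2) by auto
qed

lemma f_continuous: "continuous_on S f"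
  using has_deriv by (meson DERIV_continuous continuous_at_imp_continuous_on)

lemma deriv_odd: "f' (- x) = - f' x"
proof -
  have "((\<lambda>s. f (- s)) has_real_derivative - f' (- x)) (at x)"
    using has_deriv[of "- x"] by (simp add: DERIV_mirror)
  then have "(f has_real_derivative - f' (- x)) (at x)"
    by (simp add: f_even)
  then show ?thesis using has_deriv DERIV_unique by fastforce
qed

lemma deriv_eq_1: "a \<le> x \<Longrightarrow> f' x = 1"
proof -
  assume "a \<le> x"
  have "(f has_real_derivative f' x) (at x within {x..x+1})"
    by (rule has_field_derivative_at_within[OF has_deriv])
  then have "((\<lambda>s. s) has_real_derivative f' x) (at x within {x..x+1})"
    by (rule has_field_derivative_transform_within[where d = 1])
       (use \<open>a \<le> x\<close> a_pos f_eq_abs in auto)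
  moreover have "((\<lambda>s. s) has_real_derivative 1) (at x within {x..x+1})"
    by (rule DERIV_ident)
  ultimately show ?thesis
    by (rule has_field_derivative_unique) (simp add: at_within_Icc_at_right)
qed

lemma deriv_eq_minus_1: "x \<le> - a \<Longrightarrow> f' x = - 1"
  using deriv_eq_1[of "- x"] deriv_odd[of x] by simp

lemma deriv_strict_mono_on: "strict_mono_on {-a..a} f'"
proof (rule strict_mono_on_Icc_if_Ioo)
  show "continuous_on {-a..a} f'" using deriv_continuous continuous_on_subset by blast
  show "strict_mono_on {-a<..<a} f'"
    by (intro strict_mono_onI strictly_convex_on_deriv_less[OF f_strictly_convex has_deriv])
qed

lemma deriv_mono: "x \<le> y \<Longrightarrow> f' x \<le> f' y"
proof -
  define clamp where "clamp t = max (- a) (min a t)" for t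
  have "f' t = f' (clamp t)" for t
    using deriv_eq_1[of t] deriv_eq_1[of a] deriv_eq_minus_1[of t] deriv_eq_minus_1[of "- a"] a_pos
    by (auto simp: clamp_def max_def min_def)
  moreover assume "x \<le> y"
  then have "f' (clamp x) \<le> f' (clamp y)"
    using a_pos by (intro strict_mono_on_leD[OF deriv_strict_mono_on]) (auto simp: clamp_def)
  ultimately show ?thesis by simp
qed

lemma f_diff_le: "u \<le> v \<Longrightarrow> f v - f u \<le> v - u"
proof -
  assume "u \<le> v"
  have "f' x \<le> 1" for x
    using deriv_mono[of x "max x a"] deriv_eq_1[of "max x a"] by simp
  then have "f v - v \<le> f u - u"
    by (intro DERIV_nonpos_imp_nonincreasing[OF \<open>u \<le> v\<close>])
       (auto intro!: derivative_eq_intros has_deriv)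
  then show ?thesis by simp
qed

end

locale class_C_shift = class_C_function +
  fixes \<alpha> :: real
  assumes alpha_nonneg: "0 \<le> \<alpha>" and alpha_less_1: "\<alpha> < 1"
begin

abbreviation F :: "real \<Rightarrow> real" where "F \<equiv> Falpha f \<alpha>"
abbreviation x\<^sub>\<alpha> :: real where "x\<^sub>\<alpha> \<equiv> xplus a f \<alpha>"

lemma xplus_in_Icc: "x\<^sub>\<alpha> \<in> {-a..a}" and deriv_xplus: "f' x\<^sub>\<alpha> = \<alpha>"
proof -
  have "continuous_on {-a..a} f'" using deriv_continuous continuous_on_subset by blast
  moreover have "f' (- a) \<le> \<alpha>" "\<alpha> \<le> f' a"
    using deriv_eq_1[of a] deriv_eq_minus_1[of "- a"] alpha_nonneg alpha_less_1 by auto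
  ultimately obtain x where x: "x \<in> {-a..a}" "f' x = \<alpha>"
    using IVT'[of f' "- a" \<alpha> a] a_pos by auto
  have unique: "y = x" if "y \<in> {-a..a}" "f' y = \<alpha>" for y
    using inj_onD[OF strict_mono_on_imp_inj_on[OF deriv_strict_mono_on], of y x] x that by simp
  have "x\<^sub>\<alpha> = x"
    unfolding xplus_def by (rule the_equality) (use x unique in blast)+
  with x show "x\<^sub>\<alpha> \<in> {-a..a}" "f' x\<^sub>\<alpha> = \<alpha>" by auto
qed

lemma deriv_le_alpha: "x \<le> x\<^sub>\<alpha> \<Longrightarrow> f' x \<le> \<alpha>"
  using deriv_mono deriv_xplus by metis

lemma deriv_gt_alpha: "x\<^sub>\<alpha> < x \<Longrightarrow> \<alpha> < f' x"
  using strict_mono_onD[OF deriv_strict_mono_on, of x\<^sub>\<alpha> x] xplus_in_Icc deriv_xplus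
    deriv_eq_1[of x] alpha_less_1
  by (cases "x \<le> a") auto

lemma Falpha_has_deriv: "(F has_real_derivative f' x - \<alpha>) (at x)"
  unfolding Falpha_def by (auto intro!: derivative_eq_intros has_deriv)

lemma Falpha_continuous: "continuous_on S F"
  unfolding Falpha_def by (intro continuous_intros f_continuous)

lemma Falpha_antimono: "x \<le> y \<Longrightarrow> y \<le> x\<^sub>\<alpha> \<Longrightarrow> F y \<le> F x"
  by (rule DERIV_nonpos_imp_nonincreasing) (use Falpha_has_deriv deriv_le_alpha in force)+

lemma Falpha_strict_mono: "x\<^sub>\<alpha> \<le> x \<Longrightarrow> x < y \<Longrightarrow> F x < F y"
  by (rule DERIV_pos_imp_increasing_open)
     (use Falpha_has_deriv deriv_gt_alpha Falpha_continuous in force)+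

lemma Falpha_ge_xplus: "F x\<^sub>\<alpha> \<le> F x"
  using Falpha_antimono[of x x\<^sub>\<alpha>] Falpha_strict_mono[of x\<^sub>\<alpha> x] by (cases "x \<le> x\<^sub>\<alpha>") auto

lemma Falpha_right: "a \<le> s \<Longrightarrow> F s = (1 - \<alpha>) * s"
  using f_eq_abs[of s] a_pos by (simp add: Falpha_def algebra_simps)

lemma Falpha_left: "s \<le> - a \<Longrightarrow> F s = - (1 + \<alpha>) * s"
  using f_eq_abs[of s] a_pos by (simp add: Falpha_def algebra_simps)

lemma Finv_eqI: "x\<^sub>\<alpha> \<le> z \<Longrightarrow> F z = y \<Longrightarrow> Finv a f \<alpha> y = z"
  unfolding Finv_def
proof (rule the_equality)
  fix w assume "x\<^sub>\<alpha> \<le> z" "F z = y" "x\<^sub>\<alpha> \<le> w \<and> F w = y"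
  then show "w = z"
    using Falpha_strict_mono[of z w] Falpha_strict_mono[of w z] by (cases w z rule: linorder_cases) auto
qed auto

lemma
  assumes "F x\<^sub>\<alpha> \<le> y"
  shows Finv_ge_xplus: "x\<^sub>\<alpha> \<le> Finv a f \<alpha> y" and Falpha_Finv: "F (Finv a f \<alpha> y) = y"
proof -
  define R where "R = max a (y / (1 - \<alpha>))"
  have "y = (1 - \<alpha>) * (y / (1 - \<alpha>))" using alpha_less_1 by simp
  also have "\<dots> \<le> (1 - \<alpha>) * R" using alpha_less_1 by (intro mult_left_mono) (auto simp: R_def)
  also have "\<dots> = F R" using Falpha_right[of R] by (simp add: R_def)
  finally have "y \<le> F R" .
  moreover have "x\<^sub>\<alpha> \<le> R" using xplus_in_Icc R_def by auto
  ultimately obtain z where "x\<^sub>\<alpha> \<le> z" "F z = y"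
    using IVT'[of F x\<^sub>\<alpha> y R] Falpha_continuous assms by auto
  then show "x\<^sub>\<alpha> \<le> Finv a f \<alpha> y" "F (Finv a f \<alpha> y) = y" using Finv_eqI by auto
qed

abbreviation \<phi> :: "real \<Rightarrow> real" where "\<phi> \<equiv> phi a f \<alpha>"

lemma phi_ge_xplus: "x\<^sub>\<alpha> \<le> \<phi> x" and Falpha_phi: "F (\<phi> x) = F x"
  unfolding phi_def using Finv_ge_xplus Falpha_Finv Falpha_ge_xplus by auto

lemma phi_antimono: "x \<le> y \<Longrightarrow> y \<le> x\<^sub>\<alpha> \<Longrightarrow> \<phi> y \<le> \<phi> x"
  using phi_ge_xplus[of x] Falpha_phi[of x] Falpha_phi[of y] Falpha_antimono[of x y]
    Falpha_strict_mono[of "\<phi> x" "\<phi> y"]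
  by force

lemma phi_xplus: "\<phi> x\<^sub>\<alpha> = x\<^sub>\<alpha>"
  unfolding phi_def by (rule Finv_eqI) auto

lemma phi_left: "x \<le> - a \<Longrightarrow> \<phi> x = F x / (1 - \<alpha>)"
proof -
  assume "x \<le> - a"
  then have "(1 - \<alpha>) * a \<le> (1 + \<alpha>) * (- x)"
    using alpha_nonneg alpha_less_1 a_pos by (intro mult_mono) auto
  also have "\<dots> = F x" using Falpha_left[OF \<open>x \<le> - a\<close>] by (simp add: algebra_simps)
  finally have "a \<le> F x / (1 - \<alpha>)"
    using alpha_less_1 by (simp add: pos_le_divide_eq mult.commute)
  then show ?thesis
    unfolding phi_def using Falpha_right alpha_less_1 xplus_in_Icc by (intro Finv_eqI) auto
qed

lemma phi_continuous: "continuous_on {-a..x\<^sub>\<alpha>} \<phi>"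
proof -
  have "continuous_on (F ` {x\<^sub>\<alpha>..\<phi> (- a)}) (Finv a f \<alpha>)"
    by (rule continuous_on_inv[OF Falpha_continuous compact_Icc]) (auto intro: Finv_eqI)
  moreover have "F ` {-a..x\<^sub>\<alpha>} \<subseteq> F ` {x\<^sub>\<alpha>..\<phi> (- a)}"
  proof
    fix y assume "y \<in> F ` {-a..x\<^sub>\<alpha>}"
    then obtain x where x: "x \<in> {-a..x\<^sub>\<alpha>}" "y = F x" by auto
    then have "\<phi> x \<in> {x\<^sub>\<alpha>..\<phi> (- a)}" using phi_ge_xplus phi_antimono by auto
    then show "y \<in> F ` {x\<^sub>\<alpha>..\<phi> (- a)}" using Falpha_phi x by (metis image_eqI)
  qed
  ultimately show ?thesis
    unfolding phi_def by (rule continuous_on_compose2[OF _ Falpha_continuous])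
qed

definition shift :: "real \<Rightarrow> real" where "shift x = x + delta a f \<alpha> x"

lemma shift_expanding: "x \<le> y \<Longrightarrow> y \<le> x\<^sub>\<alpha> \<Longrightarrow> y - x \<le> shift y - shift x"
proof -
  assume "x \<le> y" "y \<le> x\<^sub>\<alpha>"
  then have "\<phi> y \<le> \<phi> x" by (rule phi_antimono)
  then have "f (\<phi> x) - f (\<phi> y) \<le> \<phi> x - \<phi> y" by (rule f_diff_le)
  then have "F x - F y \<le> (1 - \<alpha>) * (\<phi> x - \<phi> y)"
    using Falpha_phi[of x] Falpha_phi[of y] by (simp add: Falpha_def algebra_simps)
  then have "(F x - F y) / (1 - \<alpha>) \<le> \<phi> x - \<phi> y"
    using alpha_less_1 by (simp add: pos_divide_le_eq mult.commute)
  then show ?thesis unfolding shift_def delta_def by (simp add: diff_divide_distrib)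
qed

lemma shift_left: "x \<le> - a \<Longrightarrow> shift x = x"
  unfolding shift_def delta_def by (simp add: phi_left)

lemma shift_continuous: "continuous_on {-a..x\<^sub>\<alpha>} shift"
  unfolding shift_def delta_def
  by (intro continuous_intros Falpha_continuous phi_continuous) (use alpha_less_1 in auto)

abbreviation s\<^sub>\<alpha> :: real where "s\<^sub>\<alpha> \<equiv> salpha a f \<alpha>"

lemma salpha_shift: "s\<^sub>\<alpha> = shift x\<^sub>\<alpha>"
  unfolding salpha_def shift_def ..

lemma salpha_Falpha: "s\<^sub>\<alpha> = F x\<^sub>\<alpha> / (1 - \<alpha>)"
  unfolding salpha_def delta_def phi_xplus by simp

lemma minus_a_le_salpha: "- a \<le> s\<^sub>\<alpha>"
  using shift_expanding[of "- a" x\<^sub>\<alpha>] shift_left[of "- a"] xplus_in_Icc salpha_shift by auto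

abbreviation \<tau> :: "real \<Rightarrow> real" where "\<tau> \<equiv> tau a f \<alpha>"

lemma tau_eqI: "x \<le> x\<^sub>\<alpha> \<Longrightarrow> shift x = y \<Longrightarrow> \<tau> y = x"
  unfolding tau_def shift_def[symmetric]
proof (rule the_equality)
  fix z assume "x \<le> x\<^sub>\<alpha>" "shift x = y" "z \<le> x\<^sub>\<alpha> \<and> shift z = y"
  then show "z = x"
    using shift_expanding[of x z] shift_expanding[of z x] by (cases "x \<le> z") auto
qed auto

lemma
  assumes "y \<le> s\<^sub>\<alpha>"
  shows tau_le_xplus: "\<tau> y \<le> x\<^sub>\<alpha>" and shift_tau: "shift (\<tau> y) = y"
proof -
  obtain x where "x \<le> x\<^sub>\<alpha>" "shift x = y"
  proof (cases "y \<le> - a")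
    case True
    then show ?thesis using that[of y] shift_left xplus_in_Icc by auto
  next
    case False
    then have "shift (- a) \<le> y" "y \<le> shift x\<^sub>\<alpha>" using shift_left assms salpha_shift by auto
    then show ?thesis
      using that IVT'[OF _ _ _ shift_continuous] xplus_in_Icc by force
  qed
  then show "\<tau> y \<le> x\<^sub>\<alpha>" "shift (\<tau> y) = y" using tau_eqI by auto
qed

lemma tau_continuous: "continuous_on {..s\<^sub>\<alpha>} \<tau>"
proof (rule lipschitz_on_continuous_on)
  show "1-lipschitz_on {..s\<^sub>\<alpha>} \<tau>"
  proof (rule lipschitz_onI)
    fix y z assume "y \<in> {..s\<^sub>\<alpha>}" "z \<in> {..s\<^sub>\<alpha>}"
    then show "dist (\<tau> y) (\<tau> z) \<le> 1 * dist y z"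
      using tau_le_xplus[of y] tau_le_xplus[of z] shift_tau[of y] shift_tau[of z]
        shift_expanding[of "\<tau> y" "\<tau> z"] shift_expanding[of "\<tau> z" "\<tau> y"]
      by (cases "\<tau> y \<le> \<tau> z") (auto simp: dist_real_def)
  qed simp
qed

lemma Sh_salpha: "Sh a \<alpha> f s\<^sub>\<alpha> = s\<^sub>\<alpha>"
proof -
  have "\<tau> s\<^sub>\<alpha> = x\<^sub>\<alpha>" using tau_eqI[of x\<^sub>\<alpha>] salpha_shift by simp
  then have "Sh a \<alpha> f s\<^sub>\<alpha> = \<alpha> * s\<^sub>\<alpha> + F x\<^sub>\<alpha>" by (simp add: Sh_def)
  also have "\<dots> = s\<^sub>\<alpha>" unfolding salpha_Falpha using alpha_less_1 by (simp add: field_simps)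
  finally show ?thesis .
qed

lemma Sh_continuous: "continuous_on UNIV (Sh a \<alpha> f)"
proof -
  have "continuous_on {..s\<^sub>\<alpha>} (Sh a \<alpha> f)"
  proof (rule continuous_on_eq)
    show "continuous_on {..s\<^sub>\<alpha>} (\<lambda>x. \<alpha> * x + F (\<tau> x))"
      by (intro continuous_intros continuous_on_compose2[OF Falpha_continuous tau_continuous]) auto
  qed (simp add: Sh_def)
  moreover have "continuous_on {s\<^sub>\<alpha>..} (Sh a \<alpha> f)"
  proof (rule continuous_on_eq)
    show "continuous_on {s\<^sub>\<alpha>..} (\<lambda>x. x)" by (rule continuous_on_id)
  qed (use Sh_salpha in \<open>auto simp: Sh_def\<close>)
  ultimately have "continuous_on ({..s\<^sub>\<alpha>} \<union> {s\<^sub>\<alpha>..}) (Sh a \<alpha> f)"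
    by (intro continuous_on_closed_Un) auto
  moreover have "{..s\<^sub>\<alpha>} \<union> {s\<^sub>\<alpha>..} = UNIV" by auto
  ultimately show ?thesis by simp
qed

lemma Sh_eq_abs: "max a (\<bar>s\<^sub>\<alpha>\<bar> + 1) \<le> \<bar>x\<bar> \<Longrightarrow> Sh a \<alpha> f x = \<bar>x\<bar>"
proof (cases "x \<le> 0")
  case True
  assume "max a (\<bar>s\<^sub>\<alpha>\<bar> + 1) \<le> \<bar>x\<bar>"
  with True have "x \<le> - a" by auto
  then have "x \<le> s\<^sub>\<alpha>" and "\<tau> x = x"
    using minus_a_le_salpha tau_eqI[of x x] shift_left xplus_in_Icc by auto
  then show ?thesis using f_eq_abs[of x] \<open>x \<le> - a\<close> a_pos by (simp add: Sh_def Falpha_def)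
qed (auto simp: Sh_def)

end

theorem proposition3p26:
  fixes a \<alpha> :: real and f :: "real \<Rightarrow> real"
  assumes "a > 0" and "0 \<le> \<alpha>" and "\<alpha> < 1" and "f \<in> class_C a"
  defines "g \<equiv> Sh a \<alpha> f"
  shows "((\<lambda>\<eta>. supnorm (\<lambda>x. g x - rescale (1 + \<eta> / 2) g x)) \<longlongrightarrow> 0) (at_right 0)
       \<and> ((\<lambda>\<eta>. supnorm (\<lambda>x. g x - rescale (1 - \<eta> / 2) g x)) \<longlongrightarrow> 0) (at_right 0)"
proof -
  interpret class_C_shift a f \<alpha> using assms(1-4) by unfold_locales
  have "((\<lambda>\<eta>. supnorm (\<lambda>x. g x - rescale (c \<eta>) g x)) \<longlongrightarrow> 0) (at_right 0)"
    if "(c \<longlongrightarrow> 1) (at_right 0)" for c :: "real \<Rightarrow> real"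
    unfolding g_def using Sh_continuous Sh_eq_abs that by (rule supnorm_rescale_tendsto_0)
  moreover have "((\<lambda>\<eta>::real. 1 + \<eta> / 2) \<longlongrightarrow> 1) (at_right 0)"
    and "((\<lambda>\<eta>::real. 1 - \<eta> / 2) \<longlongrightarrow> 1) (at_right 0)"
    by (auto intro!: tendsto_eq_intros)
  ultimately show ?thesis by blast
qed

end
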